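(* Let $\mathcal{Z}=\langle c,G\rangle\subset\mathbb{R}^n$ be a zonotope, fix a reduction order for Girard reduction $\operatorname{GR}$, and let $P\in\mathbb{R}^{n\times n}$ be orthogonal. Then: (1) (Containment) $\mathcal{Z}\subseteq P\cdot\operatorname{GR}(P^\top\mathcal{Z})$. (2) (Volume bound) Let $G_{\mathrm{disc}}\in\mathbb{R}^{n\times m}$ be the submatrix of generators discarded by the reduction, $S=G_{\mathrm{disc}}G_{\mathrm{disc}}^\top$, and for orthogonal $P$ let $d(P)=|P^\top G_{\mathrm{disc}}|\mathbf{1}_m\in\mathbb{R}^n$ (entrywise absolute value), i.e. $d_i(P)=\|e_i^\top P^\top G_{\mathrm{disc}}\|_1$, and $\mathcal{B}(d(P))=\{x:|x_i|\le d_i(P)\ \forall i\}$ the corresponding axis-aligned box (the interval-hull term injected by Girard reduction in the rotated coordinates). Then $$\mathrm{vol}(\mathcal{B}(d(P)))=2^n\prod_{i=1}^n d_i(P)\le(2\sqrt m)^n\sqrt{\prod_{i=1}^n(P^\top SP)_{ii}},$$ and the right-hand side is minimized over all orthogonal $P$ by any PCA basis of $G_{\mathrm{disc}}$, i.e. any orthogonal $P$ for which $P^\top SP$ is diagonal.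
   Context: A zonotope is $\langle c,G\rangle=\{c+G\xi:\xi\in[-1,1]^p\}$ with $c\in\mathbb{R}^n$, $G\in\mathbb{R}^{n\times p}$; for a matrix $Q$, $Q\langle c,G\rangle=\langle Qc,QG\rangle$. Girard order reduction $\operatorname{GR}$ with target order $\rho$: given $\langle c,G\rangle$, keep the $\rho n-n$ columns of $G$ with largest Euclidean norm (index set $\mathcal{I}_{\mathrm{keep}}$), and replace the remaining (discarded) columns $\mathcal{I}_{\mathrm{disc}}$ by their axis-aligned interval hull with half-widths $d_i=\sum_{j\in\mathcal{I}_{\mathrm{disc}}}|G_{ij}|$; the result is $\operatorname{GR}(\langle c,G\rangle)=\langle c,[G_{:,\mathcal{I}_{\mathrm{keep}}},\mathrm{diag}(d)]\rangle$. It satisfies $\mathcal{Z}\subseteq\operatorname{GR}(\mathcal{Z})$. $\mathrm{vol}$ is Lebesgue volume, $\mathbf{1}_m$ the all-ones vector, $e_i$ the $i$-th standard basis vector. *)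

theory Defs
  imports "HOL-Analysis.Analysis"
begin

definition zonotope :: "real^'n \<Rightarrow> ('i \<Rightarrow> real^'n) \<Rightarrow> 'i set \<Rightarrow> (real^'n) set" where
  "zonotope c g I = {c + (\<Sum>j\<in>I. xi j *\<^sub>R g j) | xi. \<forall>j\<in>I. \<bar>xi j\<bar> \<le> 1}"

definition girard_keep :: "nat \<Rightarrow> (nat \<Rightarrow> real^'n) \<Rightarrow> nat \<Rightarrow> nat set \<Rightarrow> bool" where
  "girard_keep rho g p K \<longleftrightarrow>
     K \<subseteq> {..<p} \<and> card K = min p (rho * CARD('n) - CARD('n)) \<and>
     (\<forall>i\<in>K. \<forall>j\<in>{..<p} - K. norm (g j) \<le> norm (g i))"

definition girard_d :: "(nat \<Rightarrow> real^'n) \<Rightarrow> nat \<Rightarrow> nat set \<Rightarrow> real^'n" where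
  "girard_d g p K = (\<chi> i. \<Sum>j\<in>{..<p} - K. \<bar>g j $ i\<bar>)"

definition girard_gens :: "(nat \<Rightarrow> real^'n) \<Rightarrow> nat \<Rightarrow> nat set \<Rightarrow> nat + 'n \<Rightarrow> real^'n" where
  "girard_gens g p K k = (case k of Inl j \<Rightarrow> g j | Inr i \<Rightarrow> (girard_d g p K $ i) *\<^sub>R axis i 1)"

definition girard_red :: "real^'n \<Rightarrow> (nat \<Rightarrow> real^'n) \<Rightarrow> nat \<Rightarrow> nat set \<Rightarrow> (real^'n) set" where
  "girard_red c g p K = zonotope c (girard_gens g p K) (Inl ` K \<union> Inr ` UNIV)"

definition box_hw :: "real^'n \<Rightarrow> (real^'n) set" where
  "box_hw d = {x. \<forall>i. \<bar>x $ i\<bar> \<le> d $ i}"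

end

theory Submission
  imports Defs
begin

text \<open>Containment: a zonotope lies in its Girard reduction, because the discarded part
  \<open>\<Sum>\<^sub>j \<xi>\<^sub>j g\<^sub>j\<close> ranges over a subset of the box \<open>B(d)\<close>, which is the zonotope of the
  scaled unit vectors \<open>d\<^sub>i e\<^sub>i\<close>; rotating by \<open>P\<^sup>T\<close> and back gives (1).

  Volume: by Cauchy-Schwarz, \<open>d\<^sub>i(P) = \<Sum>\<^sub>j \<bar>(P\<^sup>T g\<^sub>j)\<^sub>i\<bar> \<le> \<surd>m \<surd>(P\<^sup>T S P)\<^sub>i\<^sub>i\<close>. If \<open>L = Q\<^sup>T S Q\<close> is
  diagonal then \<open>P\<^sup>T S P = R\<^sup>T L R\<close> with \<open>R = Q\<^sup>T P\<close> orthogonal, so the diagonal of \<open>P\<^sup>T S P\<close> is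
  obtained from that of \<open>L\<close> by the doubly stochastic matrix \<open>(R\<^sub>k\<^sub>i\<^sup>2)\<close>; concavity of \<open>ln\<close>
  (Jensen) shows that such a mixing can only increase the product of the entries.\<close>

definition scatter_matrix :: "('j \<Rightarrow> real^'n) \<Rightarrow> 'j set \<Rightarrow> real^'n^'n" where
  "scatter_matrix g D = (\<chi> a b. \<Sum>j\<in>D. g j $ a * g j $ b)"

lemma scatter_matrix_diag_nonneg: "0 \<le> scatter_matrix g D $ i $ i"
  by (simp add: scatter_matrix_def sum_nonneg)

lemma scatter_matrix_congruence:
  fixes Q :: "real^'n^'n"
  shows "transpose Q ** scatter_matrix g D ** Q = scatter_matrix (\<lambda>j. transpose Q *v g j) D"
  by (simp add: vec_eq_iff scatter_matrix_def matrix_matrix_mult_def matrix_vector_mult_def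
      transpose_def sum_distrib_left sum_distrib_right sum_product mult_ac sum.swap[of _ D]
      del: transpose_matrix_vector)

lemma zonotope_linear_image:
  assumes "linear f"
  shows "f ` zonotope c g I = zonotope (f c) (\<lambda>j. f (g j)) I"
proof -
  have "f (c + (\<Sum>j\<in>I. \<xi> j *\<^sub>R g j)) = f c + (\<Sum>j\<in>I. \<xi> j *\<^sub>R f (g j))" for \<xi>
    by (simp add: linear_add[OF assms] linear_sum[OF assms] linear_scale[OF assms])
  then show ?thesis
    unfolding zonotope_def by (auto simp: image_iff) metis+
qed

lemma zonotope_add_mem_case_sum:
  assumes "finite I" "finite J" "x \<in> zonotope c g I" "y \<in> zonotope 0 h J"
  shows "x + y \<in> zonotope c (case_sum g h) (Inl ` I \<union> Inr ` J)"
proof -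
  obtain \<xi> where x: "x = c + (\<Sum>j\<in>I. \<xi> j *\<^sub>R g j)" and \<xi>: "\<forall>j\<in>I. \<bar>\<xi> j\<bar> \<le> 1"
    using assms(3) unfolding zonotope_def by blast
  obtain \<eta> where y: "y = (\<Sum>j\<in>J. \<eta> j *\<^sub>R h j)" and \<eta>: "\<forall>j\<in>J. \<bar>\<eta> j\<bar> \<le> 1"
    using assms(4) unfolding zonotope_def by auto
  have "(\<Sum>k\<in>Inl ` I \<union> Inr ` J. case_sum \<xi> \<eta> k *\<^sub>R case_sum g h k)
      = (\<Sum>j\<in>I. \<xi> j *\<^sub>R g j) + (\<Sum>j\<in>J. \<eta> j *\<^sub>R h j)"
    using assms(1,2) by (subst sum.union_disjoint) (auto simp: sum.reindex)
  then show ?thesis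
    unfolding zonotope_def x y using \<xi> \<eta>
    by (intro CollectI exI[of _ "case_sum \<xi> \<eta>"]) (auto simp: add.assoc)
qed

lemma sum_scaleR_mem_box_hw:
  assumes "\<And>j. j \<in> D \<Longrightarrow> \<bar>\<xi> j\<bar> \<le> 1"
  shows "(\<Sum>j\<in>D. \<xi> j *\<^sub>R g j) \<in> box_hw (\<chi> i. \<Sum>j\<in>D. \<bar>g j $ i\<bar>)"
  unfolding box_hw_def
proof clarsimp
  fix i
  have "\<bar>\<Sum>j\<in>D. \<xi> j * g j $ i\<bar> \<le> (\<Sum>j\<in>D. \<bar>\<xi> j * g j $ i\<bar>)"
    by (rule sum_abs)
  also have "\<dots> \<le> (\<Sum>j\<in>D. \<bar>g j $ i\<bar>)"
    using assms by (intro sum_mono) (simp add: abs_mult mult_left_le_one_le)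
  finally show "\<bar>\<Sum>j\<in>D. \<xi> j * g j $ i\<bar> \<le> (\<Sum>j\<in>D. \<bar>g j $ i\<bar>)" .
qed

lemma box_hw_subset_zonotope:
  fixes d :: "real^'n"
  shows "box_hw d \<subseteq> zonotope 0 (\<lambda>i. (d $ i) *\<^sub>R axis i 1) UNIV"
proof
  fix x assume "x \<in> box_hw d"
  then have x: "\<bar>x $ i\<bar> \<le> d $ i" for i
    by (simp add: box_hw_def)
  define \<eta> where "\<eta> i = (if d $ i = 0 then 0 else x $ i / d $ i)" for i
  have "\<bar>\<eta> i\<bar> \<le> 1" for i
    using x[of i] by (auto simp: \<eta>_def abs_divide divide_le_eq_1)
  moreover have "\<eta> i * d $ i = x $ i" for i
    using x[of i] by (auto simp: \<eta>_def)
  then have "(\<Sum>i\<in>UNIV. \<eta> i *\<^sub>R (d $ i) *\<^sub>R axis i 1) = x"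
    using basis_expansion[of x] by (simp add: scalar_mult_eq_scaleR mult.commute)
  ultimately show "x \<in> zonotope 0 (\<lambda>i. (d $ i) *\<^sub>R axis i 1) UNIV"
    unfolding zonotope_def by force
qed

lemma zonotope_subset_girard_red:
  assumes "K \<subseteq> {..<p}"
  shows "zonotope c g {..<p} \<subseteq> girard_red c g p K"
proof
  fix x assume "x \<in> zonotope c g {..<p}"
  then obtain \<xi> where x: "x = c + (\<Sum>j\<in>{..<p}. \<xi> j *\<^sub>R g j)" and \<xi>: "\<forall>j\<in>{..<p}. \<bar>\<xi> j\<bar> \<le> 1"
    unfolding zonotope_def by blast
  have "finite K" using assms finite_subset by blast
  have kept: "c + (\<Sum>j\<in>K. \<xi> j *\<^sub>R g j) \<in> zonotope c g K"
    using \<xi> assms unfolding zonotope_def by blast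
  have "(\<Sum>j\<in>{..<p} - K. \<xi> j *\<^sub>R g j) \<in> box_hw (girard_d g p K)"
    unfolding girard_d_def using \<xi> by (intro sum_scaleR_mem_box_hw) auto
  then have discarded: "(\<Sum>j\<in>{..<p} - K. \<xi> j *\<^sub>R g j)
      \<in> zonotope 0 (\<lambda>i. (girard_d g p K $ i) *\<^sub>R axis i 1) UNIV"
    using box_hw_subset_zonotope by blast
  have "girard_gens g p K = case_sum g (\<lambda>i. (girard_d g p K $ i) *\<^sub>R axis i 1)"
    by (auto simp: fun_eq_iff girard_gens_def split: sum.split)
  moreover have "x = (c + (\<Sum>j\<in>K. \<xi> j *\<^sub>R g j)) + (\<Sum>j\<in>{..<p} - K. \<xi> j *\<^sub>R g j)"
    unfolding x using assms by (simp add: sum.subset_diff[of K] add.assoc)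
  ultimately show "x \<in> girard_red c g p K"
    unfolding girard_red_def using zonotope_add_mem_case_sum[OF \<open>finite K\<close> _ kept discarded]
    by simp
qed

lemma zonotope_subset_rotated_girard_red:
  fixes P :: "real^'n^'n"
  assumes "orthogonal_matrix P" "K \<subseteq> {..<p}"
  shows "zonotope c g {..<p} \<subseteq>
         (\<lambda>x. P *v x) ` girard_red (transpose P *v c) (\<lambda>j. transpose P *v g j) p K"
proof -
  have "zonotope c g {..<p} = (\<lambda>x. P *v x) ` (\<lambda>x. transpose P *v x) ` zonotope c g {..<p}"
    using assms(1) by (simp add: image_image matrix_vector_mul_assoc orthogonal_matrix_def
        del: transpose_matrix_vector)
  also have "\<dots> = (\<lambda>x. P *v x) ` zonotope (transpose P *v c) (\<lambda>j. transpose P *v g j) {..<p}"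
    by (simp add: zonotope_linear_image del: transpose_matrix_vector)
  also have "\<dots> \<subseteq> (\<lambda>x. P *v x) ` girard_red (transpose P *v c) (\<lambda>j. transpose P *v g j) p K"
    using zonotope_subset_girard_red[OF assms(2)] by blast
  finally show ?thesis .
qed

lemma measure_box_hw:
  fixes d :: "real^'n"
  assumes "\<And>i. 0 \<le> d $ i"
  shows "measure lebesgue (box_hw d) = 2 ^ CARD('n) * (\<Prod>i\<in>UNIV. d $ i)"
proof -
  have "box_hw d = cbox (-d) d"
    by (intro set_eqI) (simp add: box_hw_def mem_box_cart abs_le_iff minus_le_iff conj_commute)
  moreover have "- d $ i \<le> d $ i" for i
    using assms[of i] by linarith
  then have "cbox (-d) d \<noteq> {}"
    by (simp add: interval_eq_empty_cart not_less)
  ultimately show ?thesis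
    by (simp add: content_cbox_cart prod.distrib)
qed

lemma real_sqrt_prod: "sqrt (prod f A) = (\<Prod>i\<in>A. sqrt (f i))"
  by (induct A rule: infinite_finite_induct) (auto simp: real_sqrt_mult)

lemma sum_abs_le_sqrt_card_mult_sqrt_sum_squares:
  fixes h :: "'j \<Rightarrow> real"
  shows "(\<Sum>j\<in>D. \<bar>h j\<bar>) \<le> sqrt (card D) * sqrt (\<Sum>j\<in>D. (h j)\<^sup>2)"
proof -
  have "(\<Sum>j\<in>D. \<bar>h j\<bar>)\<^sup>2 \<le> card D * (\<Sum>j\<in>D. (h j)\<^sup>2)"
    using sum_squared_le_sum_of_squares[of "\<lambda>j. \<bar>h j\<bar>" D] by (simp add: mult.commute)
  then have "sqrt ((\<Sum>j\<in>D. \<bar>h j\<bar>)\<^sup>2) \<le> sqrt (card D * (\<Sum>j\<in>D. (h j)\<^sup>2))"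
    by (rule real_sqrt_le_mono)
  then show ?thesis
    by (simp add: real_sqrt_mult sum_nonneg)
qed

lemma prod_sum_abs_le_sqrt_prod_scatter_diag:
  fixes h :: "'j \<Rightarrow> real^'n"
  shows "(\<Prod>i\<in>UNIV. \<Sum>j\<in>D. \<bar>h j $ i\<bar>)
    \<le> sqrt (card D) ^ CARD('n) * sqrt (\<Prod>i\<in>UNIV. scatter_matrix h D $ i $ i)"
proof -
  have "(\<Prod>i\<in>UNIV. \<Sum>j\<in>D. \<bar>h j $ i\<bar>) \<le> (\<Prod>i\<in>UNIV. sqrt (card D) * sqrt (scatter_matrix h D $ i $ i))"
    using sum_abs_le_sqrt_card_mult_sqrt_sum_squares[of "\<lambda>j. h j $ _" D]
    by (intro prod_mono) (simp add: sum_nonneg scatter_matrix_def power2_eq_square)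
  then show ?thesis
    by (simp add: prod.distrib real_sqrt_prod)
qed

lemma prod_le_prod_doubly_stochastic_mix:
  fixes W :: "'a::finite \<Rightarrow> 'a \<Rightarrow> real" and l :: "'a \<Rightarrow> real"
  assumes W: "\<And>k i. 0 \<le> W k i"
    and cols: "\<And>i. (\<Sum>k\<in>UNIV. W k i) = 1" and rows: "\<And>k. (\<Sum>i\<in>UNIV. W k i) = 1"
    and l: "\<And>k. 0 \<le> l k"
  shows "(\<Prod>k\<in>UNIV. l k) \<le> (\<Prod>i\<in>UNIV. \<Sum>k\<in>UNIV. W k i * l k)"
proof (cases "\<exists>k. l k = 0")
  case True
  then have "(\<Prod>k\<in>UNIV. l k) = 0"
    by auto
  moreover have "0 \<le> (\<Prod>i\<in>UNIV. \<Sum>k\<in>UNIV. W k i * l k)"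
    using W l by (intro prod_nonneg sum_nonneg) auto
  ultimately show ?thesis
    by linarith
next
  case False
  with l have l_pos: "0 < l k" for k
    by (metis less_eq_real_def)
  have mix_pos: "0 < (\<Sum>k\<in>UNIV. W k i * l k)" for i
  proof -
    obtain k where "W k i \<noteq> 0"
      using cols[of i] by (metis sum.neutral zero_neq_one)
    then have "0 < W k i * l k"
      using W[of k i] l_pos[of k] by simp
    also have "\<dots> \<le> (\<Sum>k\<in>UNIV. W k i * l k)"
      using W l by (intro member_le_sum) auto
    finally show ?thesis .
  qed
  have jensen: "(\<Sum>k\<in>UNIV. W k i * ln (l k)) \<le> ln (\<Sum>k\<in>UNIV. W k i * l k)" for i
    using concave_on_sum[OF finite UNIV_not_empty ln_concave, of "\<lambda>k. W k i" l] W cols l_pos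
    by auto
  have "ln (\<Prod>k\<in>UNIV. l k) = (\<Sum>k\<in>UNIV. ln (l k))"
    using l_pos by (intro ln_prod) (auto simp: less_le)
  also have "\<dots> = (\<Sum>k\<in>UNIV. (\<Sum>i\<in>UNIV. W k i) * ln (l k))"
    by (simp add: rows)
  also have "\<dots> = (\<Sum>i\<in>UNIV. \<Sum>k\<in>UNIV. W k i * ln (l k))"
    by (simp add: sum_distrib_right) (rule sum.swap)
  also have "\<dots> \<le> (\<Sum>i\<in>UNIV. ln (\<Sum>k\<in>UNIV. W k i * l k))"
    by (intro sum_mono jensen)
  also have "\<dots> = ln (\<Prod>i\<in>UNIV. \<Sum>k\<in>UNIV. W k i * l k)"
    using mix_pos by (intro ln_prod[symmetric]) (auto simp: less_le)
  finally show ?thesis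
    using l_pos mix_pos by (simp add: prod_pos)
qed

lemma orthogonal_matrix_sum_squares:
  fixes R :: "real^'n^'n"
  assumes "orthogonal_matrix R"
  shows "(\<Sum>k\<in>UNIV. (R $ k $ i)\<^sup>2) = 1" and "(\<Sum>i\<in>UNIV. (R $ k $ i)\<^sup>2) = 1"
proof -
  have "(transpose R ** R) $ i $ i = 1" "(R ** transpose R) $ k $ k = 1"
    using assms orthogonal_matrix_def[of R] by (simp_all add: mat_def)
  then show "(\<Sum>k\<in>UNIV. (R $ k $ i)\<^sup>2) = 1" "(\<Sum>i\<in>UNIV. (R $ k $ i)\<^sup>2) = 1"
    by (simp_all add: matrix_matrix_mult_def transpose_def power2_eq_square)
qed

lemma diag_congruence_of_diagonal:
  fixes R L :: "real^'n^'n"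
  assumes "\<And>k l. k \<noteq> l \<Longrightarrow> L $ k $ l = 0"
  shows "(transpose R ** L ** R) $ i $ i = (\<Sum>k\<in>UNIV. (R $ k $ i)\<^sup>2 * L $ k $ k)"
proof -
  have "(\<Sum>k\<in>UNIV. R $ k $ i * L $ k $ l) = R $ l $ i * L $ l $ l" for l
    using assms by (subst sum.remove[of _ l]) (auto intro: sum.neutral)
  then show ?thesis
    by (simp add: matrix_matrix_mult_def transpose_def power2_eq_square mult_ac)
qed

lemma prod_diag_le_prod_diag_orthogonal_congruence:
  fixes R L :: "real^'n^'n"
  assumes "orthogonal_matrix R"
    and "\<And>k l. k \<noteq> l \<Longrightarrow> L $ k $ l = 0" and "\<And>k. 0 \<le> L $ k $ k"
  shows "(\<Prod>i\<in>UNIV. L $ i $ i) \<le> (\<Prod>i\<in>UNIV. (transpose R ** L ** R) $ i $ i)"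
proof -
  have "(\<Prod>i\<in>UNIV. L $ i $ i) \<le> (\<Prod>i\<in>UNIV. \<Sum>k\<in>UNIV. (R $ k $ i)\<^sup>2 * L $ k $ k)"
    using orthogonal_matrix_sum_squares[OF assms(1)] assms(3)
    by (intro prod_le_prod_doubly_stochastic_mix) auto
  then show ?thesis
    by (simp add: diag_congruence_of_diagonal assms(2))
qed

lemma pca_basis_minimizes_prod_diag:
  fixes P Q S :: "real^'n^'n"
  assumes "orthogonal_matrix P" "orthogonal_matrix Q"
    and "\<And>i k. i \<noteq> k \<Longrightarrow> (transpose Q ** S ** Q) $ i $ k = 0"
    and "\<And>i. 0 \<le> (transpose Q ** S ** Q) $ i $ i"
  shows "(\<Prod>i\<in>UNIV. (transpose Q ** S ** Q) $ i $ i) \<le> (\<Prod>i\<in>UNIV. (transpose P ** S ** P) $ i $ i)"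
proof -
  define R where "R = transpose Q ** P"
  have "orthogonal_matrix R"
    using assms(1,2) by (simp add: R_def orthogonal_matrix_mul)
  have "Q ** transpose Q = mat 1"
    using assms(2) by (simp add: orthogonal_matrix_def)
  have "transpose R ** (transpose Q ** S ** Q) ** R
      = transpose P ** (Q ** transpose Q) ** S ** (Q ** transpose Q) ** P"
    by (simp add: R_def matrix_transpose_mul matrix_mul_assoc)
  also have "\<dots> = transpose P ** S ** P"
    by (simp add: \<open>Q ** transpose Q = mat 1\<close>)
  finally show ?thesis
    using prod_diag_le_prod_diag_orthogonal_congruence[OF \<open>orthogonal_matrix R\<close> assms(3,4)]
    by simp
qed

lemma interval_hull_volume_bound:
  fixes g :: "'j \<Rightarrow> real^'n" and D :: "'j set" and P :: "real^'n^'n"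
  assumes orthP: "orthogonal_matrix P"
  defines "d \<equiv> \<lambda>Q :: real^'n^'n. (\<chi> i. \<Sum>j\<in>D. \<bar>(transpose Q *v g j) $ i\<bar>) :: real^'n"
    and "rhs \<equiv> \<lambda>Q :: real^'n^'n.
           (2 * sqrt (card D)) ^ CARD('n) * sqrt (\<Prod>i\<in>UNIV. (transpose Q ** scatter_matrix g D ** Q) $ i $ i)"
  shows "measure lebesgue (box_hw (d P)) = 2 ^ CARD('n) * (\<Prod>i\<in>UNIV. d P $ i)
    \<and> 2 ^ CARD('n) * (\<Prod>i\<in>UNIV. d P $ i) \<le> rhs P
    \<and> (\<forall>Q. orthogonal_matrix Q \<and> (\<forall>i k. i \<noteq> k \<longrightarrow> (transpose Q ** scatter_matrix g D ** Q) $ i $ k = 0)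
          \<longrightarrow> rhs Q \<le> rhs P)"
proof (intro conjI allI impI; (elim conjE)?)
  show "measure lebesgue (box_hw (d P)) = 2 ^ CARD('n) * (\<Prod>i\<in>UNIV. d P $ i)"
    by (rule measure_box_hw) (simp add: d_def sum_nonneg)
  show "2 ^ CARD('n) * (\<Prod>i\<in>UNIV. d P $ i) \<le> rhs P"
    using prod_sum_abs_le_sqrt_prod_scatter_diag[of "\<lambda>j. transpose P *v g j" D]
    by (simp add: d_def rhs_def scatter_matrix_congruence power_mult_distrib del: transpose_matrix_vector)
  fix Q :: "real^'n^'n"
  assume "orthogonal_matrix Q"
    and "\<forall>i k. i \<noteq> k \<longrightarrow> (transpose Q ** scatter_matrix g D ** Q) $ i $ k = 0"
  then have "(\<Prod>i\<in>UNIV. (transpose Q ** scatter_matrix g D ** Q) $ i $ i)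
      \<le> (\<Prod>i\<in>UNIV. (transpose P ** scatter_matrix g D ** P) $ i $ i)"
    by (intro pca_basis_minimizes_prod_diag[OF orthP])
      (auto simp: scatter_matrix_congruence scatter_matrix_diag_nonneg)
  then show "rhs Q \<le> rhs P"
    unfolding rhs_def by (intro mult_left_mono real_sqrt_le_mono) auto
qed

theorem lemma3p3:
  fixes c :: "real^'n" and g :: "nat \<Rightarrow> real^'n" and p :: nat and rho :: nat
    and P :: "real^'n^'n"
  assumes orthP: "orthogonal_matrix P"
  shows
    "(\<forall>K. girard_keep rho (\<lambda>j. transpose P *v g j) p K \<longrightarrow>
         zonotope c g {..<p} \<subseteq>
         (\<lambda>x. P *v x) ` girard_red (transpose P *v c) (\<lambda>j. transpose P *v g j) p K)
     \<and>
     (\<forall>K. girard_keep rho g p K \<longrightarrow>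
       (let D = {..<p} - K; m = card D;
            S = (\<chi> a b. \<Sum>j\<in>D. g j $ a * g j $ b) :: real^'n^'n;
            d = (\<lambda>Q::real^'n^'n. (\<chi> i. \<Sum>j\<in>D. \<bar>(transpose Q *v g j) $ i\<bar>) :: real^'n);
            rhs = (\<lambda>Q::real^'n^'n. (2 * sqrt (real m)) ^ CARD('n) *
                     sqrt (\<Prod>i\<in>UNIV. (transpose Q ** S ** Q) $ i $ i))
        in measure lebesgue (box_hw (d P)) = 2 ^ CARD('n) * (\<Prod>i\<in>UNIV. d P $ i)
           \<and> 2 ^ CARD('n) * (\<Prod>i\<in>UNIV. d P $ i) \<le> rhs P
           \<and> (\<forall>Q. orthogonal_matrix Q \<and>
                  (\<forall>i k. i \<noteq> k \<longrightarrow> (transpose Q ** S ** Q) $ i $ k = 0)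
                  \<longrightarrow> rhs Q \<le> rhs P)))"
proof (intro conjI allI impI)
  fix K
  assume "girard_keep rho (\<lambda>j. transpose P *v g j) p K"
  then show "zonotope c g {..<p} \<subseteq>
      (\<lambda>x. P *v x) ` girard_red (transpose P *v c) (\<lambda>j. transpose P *v g j) p K"
    using zonotope_subset_rotated_girard_red[OF orthP] by (simp add: girard_keep_def)
qed (unfold Let_def, rule interval_hull_volume_bound[OF orthP, unfolded scatter_matrix_def])

end
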